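(* For every semi-perfect graph $G$, $$\mu_\alpha(G)=\min\{k\ge 1 : G \text{ has a } k\text{-tight clique partition}\}-1.$$
   Context: All graphs are finite, simple and undirected. For a graph $G$, $\alpha(G)$ is the maximum size of an independent set and $i(G)$ is the minimum size of a maximal (with respect to inclusion) independent set; the independence gap is $\mu_\alpha(G)=\alpha(G)-i(G)$. $\theta(G)$ denotes the minimum number of cliques whose union is $V(G)$. A graph $G$ is semi-perfect if $\alpha(G)=\theta(G)$. A clique partition of $G$ is a set of pairwise disjoint cliques whose union is $V(G)$. For a positive integer $k$, a clique partition of $G$ is $k$-tight if for every $k$ cliques of the partition, their union intersects every maximal independent set of $G$. *)

theory Defs
  imports Main
begin

text \<open>A finite simple graph is given by a finite vertex set V and a symmetric,
irreflexive adjacency relation E (only its restriction to V matters).\<close>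

definition simple_graph :: "'a set \<Rightarrow> ('a \<Rightarrow> 'a \<Rightarrow> bool) \<Rightarrow> bool" where
  "simple_graph V E \<longleftrightarrow> finite V \<and> (\<forall>x\<in>V. \<forall>y\<in>V. E x y \<longrightarrow> E y x) \<and> (\<forall>x\<in>V. \<not> E x x)"

definition indep_set :: "'a set \<Rightarrow> ('a \<Rightarrow> 'a \<Rightarrow> bool) \<Rightarrow> 'a set \<Rightarrow> bool" where
  "indep_set V E S \<longleftrightarrow> S \<subseteq> V \<and> (\<forall>x\<in>S. \<forall>y\<in>S. x \<noteq> y \<longrightarrow> \<not> E x y)"

definition maximal_indep_set :: "'a set \<Rightarrow> ('a \<Rightarrow> 'a \<Rightarrow> bool) \<Rightarrow> 'a set \<Rightarrow> bool" where
  "maximal_indep_set V E S \<longleftrightarrow> indep_set V E S \<and> (\<forall>T. indep_set V E T \<and> S \<subseteq> T \<longrightarrow> T = S)"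

definition indep_number :: "'a set \<Rightarrow> ('a \<Rightarrow> 'a \<Rightarrow> bool) \<Rightarrow> nat" where
  "indep_number V E = Max (card ` {S. indep_set V E S})"

definition indep_domination_number :: "'a set \<Rightarrow> ('a \<Rightarrow> 'a \<Rightarrow> bool) \<Rightarrow> nat" where
  "indep_domination_number V E = Min (card ` {S. maximal_indep_set V E S})"

text \<open>independence gap mu_alpha(G) = alpha(G) - i(G)\<close>
definition indep_gap :: "'a set \<Rightarrow> ('a \<Rightarrow> 'a \<Rightarrow> bool) \<Rightarrow> int" where
  "indep_gap V E = int (indep_number V E) - int (indep_domination_number V E)"

definition clique :: "'a set \<Rightarrow> ('a \<Rightarrow> 'a \<Rightarrow> bool) \<Rightarrow> 'a set \<Rightarrow> bool" where
  "clique V E C \<longleftrightarrow> C \<subseteq> V \<and> (\<forall>x\<in>C. \<forall>y\<in>C. x \<noteq> y \<longrightarrow> E x y)"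

definition clique_cover_number :: "'a set \<Rightarrow> ('a \<Rightarrow> 'a \<Rightarrow> bool) \<Rightarrow> nat" where
  "clique_cover_number V E = Min {card \<C> | \<C>. (\<forall>C\<in>\<C>. clique V E C) \<and> \<Union>\<C> = V}"

definition semi_perfect :: "'a set \<Rightarrow> ('a \<Rightarrow> 'a \<Rightarrow> bool) \<Rightarrow> bool" where
  "semi_perfect V E \<longleftrightarrow> indep_number V E = clique_cover_number V E"

definition clique_partition :: "'a set \<Rightarrow> ('a \<Rightarrow> 'a \<Rightarrow> bool) \<Rightarrow> 'a set set \<Rightarrow> bool" where
  "clique_partition V E P \<longleftrightarrow> (\<forall>C\<in>P. clique V E C \<and> C \<noteq> {}) \<and> pairwise disjnt P \<and> \<Union>P = V"

definition tight_clique_partition :: "'a set \<Rightarrow> ('a \<Rightarrow> 'a \<Rightarrow> bool) \<Rightarrow> nat \<Rightarrow> 'a set set \<Rightarrow> bool" where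
  "tight_clique_partition V E k P \<longleftrightarrow> clique_partition V E P \<and>
     (\<forall>Q. Q \<subseteq> P \<and> card Q = k \<longrightarrow> (\<forall>S. maximal_indep_set V E S \<longrightarrow> \<Union>Q \<inter> S \<noteq> {}))"

end

theory Submission
  imports Defs
begin

text \<open>A clique and an independent set share at most one vertex, so in a clique partition P
  an independent set S meets exactly card S of the cliques and misses card P - card S of them.
  Hence every clique partition has at least alpha(G) cliques, and P is k-tight exactly when
  card P < k + i(G): a minimum maximal independent set is missed by card P - i(G) cliques, and
  no maximal independent set is missed by more. For a semi-perfect graph a minimum clique cover
  can be made disjoint, giving a partition into alpha(G) cliques, so the least k is
  alpha(G) - i(G) + 1.\<close>

lemma indep_set_finite: "finite V \<Longrightarrow> indep_set V E S \<Longrightarrow> finite S"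
  unfolding indep_set_def using finite_subset by blast

lemma finite_indep_sets: "finite V \<Longrightarrow> finite {S. indep_set V E S}"
  by (rule finite_subset[of _ "Pow V"]) (auto simp: indep_set_def)

lemma finite_maximal_indep_sets: "finite V \<Longrightarrow> finite {S. maximal_indep_set V E S}"
  by (rule finite_subset[OF _ finite_indep_sets]) (auto simp: maximal_indep_set_def)

lemma clique_partition_finite: "finite V \<Longrightarrow> clique_partition V E P \<Longrightarrow> finite P"
  by (rule finite_subset[of _ "Pow V"]) (auto simp: clique_partition_def clique_def)

lemma card_le_indep_number: "finite V \<Longrightarrow> indep_set V E S \<Longrightarrow> card S \<le> indep_number V E"
  unfolding indep_number_def by (intro Max_ge) (auto simp: finite_indep_sets)

lemma indep_number_attained:
  assumes "finite V"
  obtains S where "indep_set V E S" "card S = indep_number V E"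
proof -
  have "{} \<in> {S. indep_set V E S}" by (simp add: indep_set_def)
  then have "indep_number V E \<in> card ` {S. indep_set V E S}"
    unfolding indep_number_def using assms by (intro Max_in) (auto simp: finite_indep_sets)
  then show ?thesis using that by auto
qed

lemma maximum_indep_set_is_maximal:
  assumes "finite V" "indep_set V E S" "card S = indep_number V E"
  shows "maximal_indep_set V E S"
  unfolding maximal_indep_set_def
proof (intro conjI allI impI)
  fix T assume T: "indep_set V E T \<and> S \<subseteq> T"
  then have "card T \<le> card S" using assms card_le_indep_number by metis
  then show "T = S" using T assms(1) indep_set_finite card_seteq by metis
qed (fact assms(2))

lemma indep_domination_number_le:
  "finite V \<Longrightarrow> maximal_indep_set V E S \<Longrightarrow> indep_domination_number V E \<le> card S"
  unfolding indep_domination_number_def by (intro Min_le) (auto simp: finite_maximal_indep_sets)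

lemma indep_domination_number_attained:
  assumes "finite V"
  obtains S where "maximal_indep_set V E S" "card S = indep_domination_number V E"
proof -
  obtain S where "indep_set V E S" "card S = indep_number V E"
    using indep_number_attained[OF assms] .
  then have "{S. maximal_indep_set V E S} \<noteq> {}"
    using maximum_indep_set_is_maximal[OF assms] by blast
  then have "indep_domination_number V E \<in> card ` {S. maximal_indep_set V E S}"
    unfolding indep_domination_number_def using assms
    by (intro Min_in) (auto simp: finite_maximal_indep_sets)
  then show ?thesis using that by auto
qed

lemma indep_domination_number_le_indep_number:
  assumes "finite V"
  shows "indep_domination_number V E \<le> indep_number V E"
proof -
  obtain S where "indep_set V E S" "card S = indep_number V E"
    using indep_number_attained[OF assms] .
  then show ?thesis
    using assms indep_domination_number_le maximum_indep_set_is_maximal by metis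
qed

lemma card_clique_inter_indep_set:
  assumes "clique V E C" "indep_set V E S" "C \<inter> S \<noteq> {}"
  shows "card (C \<inter> S) = 1"
proof -
  obtain x where x: "x \<in> C \<inter> S" using assms(3) by blast
  have "C \<inter> S = {x}"
    using x assms(1,2) unfolding clique_def indep_set_def by blast
  then show ?thesis by simp
qed

lemma card_cliques_meeting_indep_set:
  assumes "finite V" "clique_partition V E P" "indep_set V E S"
  shows "card {C\<in>P. C \<inter> S \<noteq> {}} = card S"
proof -
  let ?M = "{C\<in>P. C \<inter> S \<noteq> {}}"
  have P: "\<forall>C\<in>P. clique V E C" "pairwise disjnt P" "\<Union>P = V" "finite P"
    using assms(2) clique_partition_finite[OF assms(1,2)] by (auto simp: clique_partition_def)
  have "S = (\<Union>C\<in>?M. C \<inter> S)" using P(3) assms(3) by (auto simp: indep_set_def) blast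
  also have "card \<dots> = (\<Sum>C\<in>?M. card (C \<inter> S))"
    using P(2,4) indep_set_finite[OF assms(1,3)]
    by (intro card_UN_disjoint) (auto simp: pairwise_def disjnt_def)
  also have "\<dots> = (\<Sum>C\<in>?M. 1)"
    using P(1) card_clique_inter_indep_set[OF _ assms(3)] by (intro sum.cong refl) blast
  finally show ?thesis by simp
qed

lemma card_clique_partition_split:
  assumes "finite V" "clique_partition V E P" "indep_set V E S"
  shows "card P = card S + card {C\<in>P. C \<inter> S = {}}"
proof -
  have "card P = card {C\<in>P. C \<inter> S \<noteq> {}} + card {C\<in>P. C \<inter> S = {}}"
    using clique_partition_finite[OF assms(1,2)]
    by (subst card_Un_disjoint[symmetric]) (auto intro: arg_cong[where f = card])
  then show ?thesis using card_cliques_meeting_indep_set[OF assms] by simp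
qed

lemma indep_number_le_card_clique_partition:
  assumes "finite V" "clique_partition V E P"
  shows "indep_number V E \<le> card P"
proof -
  obtain S where "indep_set V E S" "card S = indep_number V E"
    using indep_number_attained[OF assms(1)] .
  then show ?thesis using card_clique_partition_split[OF assms] by simp
qed

lemma clique_cover_to_partition:
  assumes "finite \<C>" "\<forall>C\<in>\<C>. clique V E C"
  shows "\<exists>P. (\<forall>C\<in>P. clique V E C \<and> C \<noteq> {}) \<and> pairwise disjnt P \<and> \<Union>P = \<Union>\<C> \<and> card P \<le> card \<C>"
  using assms
proof (induction \<C> rule: finite_induct)
  case empty
  then show ?case by auto
next
  case (insert C \<C>)
  then obtain P where P: "\<forall>C\<in>P. clique V E C \<and> C \<noteq> {}" "pairwise disjnt P" "\<Union>P = \<Union>\<C>"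
    "card P \<le> card \<C>" by auto
  define D where "D = C - \<Union>\<C>"
  show ?case
  proof (cases "D = {}")
    case True
    then show ?thesis using P insert by (intro exI[of _ P]) (auto simp: D_def)
  next
    case False
    have "clique V E D" using insert.prems unfolding D_def clique_def by auto
    moreover have "pairwise disjnt (insert D P)"
      using P(2,3) unfolding pairwise_insert D_def disjnt_def by blast
    moreover have "card (insert D P) \<le> Suc (card P)" by (simp add: card_insert_le_m1)
    ultimately show ?thesis using P False insert by (intro exI[of _ "insert D P"]) (auto simp: D_def)
  qed
qed

lemma semi_perfect_clique_partition:
  assumes "finite V" "semi_perfect V E"
  obtains P where "clique_partition V E P" "card P = indep_number V E"
proof -
  let ?covers = "{card \<C> | \<C>. (\<forall>C\<in>\<C>. clique V E C) \<and> \<Union>\<C> = V}"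
  have "finite ?covers"
    by (rule finite_subset[of _ "card ` Pow (Pow V)"]) (auto simp: clique_def assms(1))
  moreover have "card ((\<lambda>v. {v}) ` V) \<in> ?covers" by (auto simp: clique_def)
  ultimately have "clique_cover_number V E \<in> ?covers"
    unfolding clique_cover_number_def by (intro Min_in) auto
  then obtain \<C> where \<C>: "\<forall>C\<in>\<C>. clique V E C" "\<Union>\<C> = V" "card \<C> = indep_number V E"
    using assms(2) unfolding semi_perfect_def by auto
  have "finite \<C>"
    by (rule finite_subset[of _ "Pow V"]) (use \<C>(1) assms(1) in \<open>auto simp: clique_def\<close>)
  then obtain P where P: "clique_partition V E P" "card P \<le> indep_number V E"
    using clique_cover_to_partition[OF _ \<C>(1)] \<C>(2,3) unfolding clique_partition_def by metis
  then show ?thesis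
    using that indep_number_le_card_clique_partition[OF assms(1) P(1)] by simp
qed

lemma tight_clique_partition_iff:
  assumes "finite V"
  shows "tight_clique_partition V E k P \<longleftrightarrow>
           clique_partition V E P \<and> card P < k + indep_domination_number V E"
proof (cases "clique_partition V E P")
  case P: True
  let ?i = "indep_domination_number V E"
  have split: "card P = card S + card {C\<in>P. C \<inter> S = {}}" if "maximal_indep_set V E S" for S
    using that card_clique_partition_split[OF assms P] by (simp add: maximal_indep_set_def)
  show ?thesis
  proof
    assume tight: "tight_clique_partition V E k P"
    obtain S0 where S0: "maximal_indep_set V E S0" "card S0 = ?i"
      using indep_domination_number_attained[OF assms] .
    show "clique_partition V E P \<and> card P < k + ?i"
    proof (rule ccontr)
      assume "\<not> ?thesis"
      then have "k \<le> card {C\<in>P. C \<inter> S0 = {}}" using P split[OF S0(1)] S0(2) by simp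
      then obtain Q where Q: "Q \<subseteq> {C\<in>P. C \<inter> S0 = {}}" "card Q = k"
        by (rule obtain_subset_with_card_n)
      then have "\<Union>Q \<inter> S0 \<noteq> {}"
        using tight S0(1) unfolding tight_clique_partition_def by blast
      then show False using Q(1) by blast
    qed
  next
    assume "clique_partition V E P \<and> card P < k + ?i"
    then have lt: "card P < k + ?i" by simp
    show "tight_clique_partition V E k P"
      unfolding tight_clique_partition_def
    proof (intro conjI allI impI P notI)
      fix Q S assume Q: "Q \<subseteq> P \<and> card Q = k" and S: "maximal_indep_set V E S"
        and "\<Union>Q \<inter> S = {}"
      then have "card Q \<le> card {C\<in>P. C \<inter> S = {}}"
        using clique_partition_finite[OF assms P] by (intro card_mono) auto
      then show False
        using Q lt split[OF S] indep_domination_number_le[OF assms S] by linarith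
    qed
  qed
qed (simp add: tight_clique_partition_def)

theorem mainTheorem5:
  fixes V :: "'a set" and E :: "'a \<Rightarrow> 'a \<Rightarrow> bool"
  assumes "simple_graph V E" and "semi_perfect V E"
  shows "indep_gap V E = int (LEAST k. k \<ge> 1 \<and> (\<exists>P. tight_clique_partition V E k P)) - 1"
proof -
  have fin: "finite V" using assms(1) unfolding simple_graph_def by simp
  define a where "a = indep_number V E"
  define i where "i = indep_domination_number V E"
  have ia: "i \<le> a" unfolding a_def i_def by (rule indep_domination_number_le_indep_number[OF fin])
  obtain P0 where P0: "clique_partition V E P0" "card P0 = a"
    using semi_perfect_clique_partition[OF fin assms(2)] unfolding a_def .
  have tight_iff: "(\<exists>P. tight_clique_partition V E k P) \<longleftrightarrow> a < k + i" for k
    using P0 indep_number_le_card_clique_partition[OF fin, of E]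
    unfolding tight_clique_partition_iff[OF fin] a_def[symmetric] i_def[symmetric]
    by (metis le_less_trans)
  have "(LEAST k. k \<ge> 1 \<and> (\<exists>P. tight_clique_partition V E k P)) = a - i + 1"
    unfolding tight_iff using ia by (intro Least_equality) auto
  then show ?thesis unfolding indep_gap_def a_def[symmetric] i_def[symmetric] using ia by simp
qed

end
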